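(* Let $(X,\mathcal{T})$ be a finite topological space with furtherness function $\Psi$. The collection $\mathcal{B}^+=\{B^+(x,n)\mid x\in X,\ n\in\mathbb{N}\}$ of forward open balls $B^+(x,n)=\{y\in X\mid \Psi(x,y)<n\}$ is a basis for a topology on $X$, and this topology equals $\mathcal{T}$.
   Context: Here $\mathbb{N}=\{1,2,3,\dots\}$. For a finite topological space $X$ and $x\in X$, $U_x$ denotes the minimal open set containing $x$. A nested sequence of open sets around $x$ is a finite sequence $U_0\subsetneq U_1\subsetneq\cdots\subsetneq U_m=X$ of open sets with $U_0=U_x$ such that for each $j$ there is no open set $V$ with $U_j\subsetneq V\subsetneq U_{j+1}$. The furtherness function $\Psi:X\times X\to\{0,1,\dots,|X|-1\}$ is defined by: $\Psi(x,y)$ is the smallest integer $k\ge 0$ such that there exists a nested sequence $(U_j)_{j\ge0}$ of open sets around $x$ with $y\in U_k$. *)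

theory Defs
  imports "HOL-Analysis.Analysis"
begin

text \<open>Finite topological spaces are modelled by an abstract topology T with
  finite carrier topspace T (playing the role of X).\<close>

definition minimal_open :: "'a topology \<Rightarrow> 'a \<Rightarrow> 'a set" where
  "minimal_open T x = \<Inter>{U. openin T U \<and> x \<in> U}"

definition nested_seq :: "'a topology \<Rightarrow> 'a \<Rightarrow> (nat \<Rightarrow> 'a set) \<Rightarrow> nat \<Rightarrow> bool" where
  "nested_seq T x U m \<longleftrightarrow>
     U 0 = minimal_open T x \<and>
     (\<forall>j\<le>m. openin T (U j)) \<and>
     (\<forall>j<m. U j \<subset> U (Suc j) \<and>
            \<not> (\<exists>V. openin T V \<and> U j \<subset> V \<and> V \<subset> U (Suc j))) \<and>
     U m = topspace T"

definition furtherness :: "'a topology \<Rightarrow> 'a \<Rightarrow> 'a \<Rightarrow> nat" where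
  "furtherness T x y = (LEAST k. \<exists>U m. nested_seq T x U m \<and> k \<le> m \<and> y \<in> U k)"

definition forward_ball :: "'a topology \<Rightarrow> 'a \<Rightarrow> nat \<Rightarrow> 'a set" where
  "forward_ball T x n = {y \<in> topspace T. furtherness T x y < n}"

definition forward_balls :: "'a topology \<Rightarrow> 'a set set" where
  "forward_balls T = {forward_ball T x n | x n. x \<in> topspace T \<and> n \<ge> 1}"

definition is_basis_on :: "'a set \<Rightarrow> 'a set set \<Rightarrow> bool" where
  "is_basis_on X \<B> \<longleftrightarrow>
     (\<forall>B\<in>\<B>. B \<subseteq> X) \<and>
     (\<forall>x\<in>X. \<exists>B\<in>\<B>. x \<in> B) \<and>
     (\<forall>B1\<in>\<B>. \<forall>B2\<in>\<B>. \<forall>x\<in>B1 \<inter> B2. \<exists>B3\<in>\<B>. x \<in> B3 \<and> B3 \<subseteq> B1 \<inter> B2)"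

definition open_from_basis :: "'a set \<Rightarrow> 'a set set \<Rightarrow> 'a set \<Rightarrow> bool" where
  "open_from_basis X \<B> U \<longleftrightarrow> U \<subseteq> X \<and> (\<forall>x\<in>U. \<exists>B\<in>\<B>. x \<in> B \<and> B \<subseteq> U)"

end

theory Submission
  imports Defs
begin

text \<open>Since \<Psi>(x,y) = 0 exactly when y lies in the minimal open set U_x, the balls of radius 1
  are the sets U_x, and in a finite space these form a basis of the topology. Conversely every
  ball B^+(x,n) is open: if \<Psi>(x,y) = k < n is witnessed by a nested sequence with y \<in> U_k, then
  every z \<in> U_k has \<Psi>(x,z) \<le> k, so the open set U_k lies in the ball. Hence the forward balls
  are open sets containing a basis, so they are a basis generating the topology. Finiteness is
  what makes \<Psi> well defined: every proper open set has an immediate successor among the open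
  sets, so a nested sequence around any point can be built upwards from U_x.\<close>

definition saturated_open_chain :: "'a topology \<Rightarrow> (nat \<Rightarrow> 'a set) \<Rightarrow> nat \<Rightarrow> bool" where
  "saturated_open_chain T U m \<longleftrightarrow>
     (\<forall>j\<le>m. openin T (U j)) \<and>
     (\<forall>j<m. U j \<subset> U (Suc j) \<and>
            \<not> (\<exists>V. openin T V \<and> U j \<subset> V \<and> V \<subset> U (Suc j))) \<and>
     U m = topspace T"

lemma nested_seq_iff_saturated_open_chain:
  "nested_seq T x U m \<longleftrightarrow> U 0 = minimal_open T x \<and> saturated_open_chain T U m"
  unfolding nested_seq_def saturated_open_chain_def by blast

lemma finite_openin_sets:
  assumes "finite (topspace T)"
  shows "finite {U. openin T U \<and> P U}"
  by (rule finite_subset[of _ "Pow (topspace T)"]) (use assms openin_subset in auto)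

lemma open_successor_exists:
  assumes "finite (topspace T)" and "openin T A" and "A \<noteq> topspace T"
  obtains V where "openin T V" "A \<subset> V" "\<not> (\<exists>W. openin T W \<and> A \<subset> W \<and> W \<subset> V)"
proof -
  let ?S = "{V. openin T V \<and> A \<subset> V}"
  have "topspace T \<in> ?S"
    using assms(2,3) openin_subset by auto
  moreover have "finite ?S"
    using finite_openin_sets[OF assms(1), where P = "\<lambda>V. A \<subset> V"] by simp
  ultimately obtain V where V: "V \<in> ?S" and minimal: "\<forall>W\<in>?S. W \<le> V \<longrightarrow> V = W"
    using finite_has_minimal[of ?S] by blast
  have "\<not> (\<exists>W. openin T W \<and> A \<subset> W \<and> W \<subset> V)"
    using minimal by auto
  with V show thesis
    by (intro that) auto
qed

lemma saturated_open_chain_Cons: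
  assumes "openin T A" and "A \<subset> W 0" and "\<not> (\<exists>V. openin T V \<and> A \<subset> V \<and> V \<subset> W 0)"
    and "saturated_open_chain T W m"
  shows "saturated_open_chain T (\<lambda>j. if j = 0 then A else W (j - 1)) (Suc m)"
proof -
  let ?U = "\<lambda>j. if j = 0 then A else W (j - 1)"
  have "openin T (?U j)" if "j \<le> Suc m" for j
    using assms(1,4) that by (cases j) (auto simp: saturated_open_chain_def)
  moreover have "?U j \<subset> ?U (Suc j) \<and> \<not> (\<exists>V. openin T V \<and> ?U j \<subset> V \<and> V \<subset> ?U (Suc j))"
    if "j < Suc m" for j
  proof (cases j)
    case 0
    then show ?thesis
      using assms(2,3) by simp
  next
    case (Suc i)
    then have "i < m"
      using that by simp
    then show ?thesis
      using Suc assms(4) unfolding saturated_open_chain_def by simp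
  qed
  moreover have "?U (Suc m) = topspace T"
    using assms(4) by (simp add: saturated_open_chain_def)
  ultimately show ?thesis
    unfolding saturated_open_chain_def by blast
qed

lemma saturated_open_chain_from_open:
  assumes fin: "finite (topspace T)"
  shows "openin T A \<Longrightarrow> \<exists>U m. U 0 = A \<and> saturated_open_chain T U m"
proof (induction "card (topspace T - A)" arbitrary: A rule: less_induct)
  case less
  show ?case
  proof (cases "A = topspace T")
    case True
    then have "saturated_open_chain T (\<lambda>_. A) 0"
      using less.prems by (simp add: saturated_open_chain_def)
    then show ?thesis
      by (intro exI[of _ "\<lambda>_. A"] exI[of _ 0]) simp
  next
    case False
    obtain V where V: "openin T V" "A \<subset> V" and no_between: "\<not> (\<exists>W. openin T W \<and> A \<subset> W \<and> W \<subset> V)"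
      by (rule open_successor_exists[OF fin less.prems False])
    have "V \<subseteq> topspace T"
      using V(1) by (rule openin_subset)
    then have "card (topspace T - V) < card (topspace T - A)"
      using fin V(2) by (intro psubset_card_mono) auto
    then obtain W m where W: "W 0 = V" "saturated_open_chain T W m"
      using less.hyps[OF _ V(1)] by blast
    let ?U = "\<lambda>j. if j = 0 then A else W (j - 1)"
    have "saturated_open_chain T ?U (Suc m)"
      using saturated_open_chain_Cons[OF less.prems] V(2) no_between W by blast
    then show ?thesis
      by (intro exI[of _ ?U] exI[of _ "Suc m"]) simp
  qed
qed

lemma
  assumes "finite (topspace T)" and "x \<in> topspace T"
  shows openin_minimal_open: "openin T (minimal_open T x)"
    and in_minimal_open: "x \<in> minimal_open T x"
proof -
  have "topspace T \<in> {U. openin T U \<and> x \<in> U}"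
    using assms(2) by auto
  moreover have "finite {U. openin T U \<and> x \<in> U}"
    by (rule finite_openin_sets[OF assms(1)])
  ultimately show "openin T (minimal_open T x)"
    unfolding minimal_open_def by (intro openin_Inter) auto
  show "x \<in> minimal_open T x"
    unfolding minimal_open_def by auto
qed

lemma minimal_open_subset:
  assumes "openin T U" "x \<in> U"
  shows "minimal_open T x \<subseteq> U"
  using assms unfolding minimal_open_def by blast

lemma nested_seq_exists:
  assumes "finite (topspace T)" and "x \<in> topspace T"
  obtains U m where "nested_seq T x U m"
proof -
  obtain U m where "U 0 = minimal_open T x" "saturated_open_chain T U m"
    using saturated_open_chain_from_open[OF assms(1) openin_minimal_open[OF assms]] by blast
  then have "nested_seq T x U m"
    by (simp add: nested_seq_iff_saturated_open_chain)
  then show thesis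
    by (rule that)
qed

lemma furtherness_attained:
  assumes "finite (topspace T)" and "x \<in> topspace T" and "y \<in> topspace T"
  obtains U m where "nested_seq T x U m" "furtherness T x y \<le> m" "y \<in> U (furtherness T x y)"
proof -
  define P where "P k \<longleftrightarrow> (\<exists>U m. nested_seq T x U m \<and> k \<le> m \<and> y \<in> U k)" for k
  obtain U m where U: "nested_seq T x U m"
    using nested_seq_exists[OF assms(1,2)] .
  moreover have "y \<in> U m"
    using U assms(3) by (simp add: nested_seq_def)
  ultimately have "P m"
    unfolding P_def by blast
  then have "P (Least P)"
    by (rule LeastI)
  moreover have "furtherness T x y = Least P"
    unfolding furtherness_def P_def ..
  ultimately have "P (furtherness T x y)"
    by simp
  then show thesis
    using that unfolding P_def by blast
qed

lemma furtherness_le: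
  assumes "nested_seq T x U m" "k \<le> m" "z \<in> U k"
  shows "furtherness T x z \<le> k"
  unfolding furtherness_def by (rule Least_le) (use assms in blast)

lemma openin_forward_ball:
  assumes fin: "finite (topspace T)" and x: "x \<in> topspace T"
  shows "openin T (forward_ball T x n)"
  unfolding openin_subopen[of T "forward_ball T x n"]
proof
  fix y assume "y \<in> forward_ball T x n"
  then have y: "y \<in> topspace T" and lt: "furtherness T x y < n"
    by (auto simp: forward_ball_def)
  let ?k = "furtherness T x y"
  obtain U m where U: "nested_seq T x U m" "?k \<le> m" "y \<in> U ?k"
    using furtherness_attained[OF fin x y] .
  have open_Uk: "openin T (U ?k)"
    using U(1,2) unfolding nested_seq_def by blast
  have "U ?k \<subseteq> forward_ball T x n"
    using furtherness_le[OF U(1,2)] lt openin_subset[OF open_Uk]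
    by (fastforce simp: forward_ball_def)
  then show "\<exists>V. openin T V \<and> y \<in> V \<and> V \<subseteq> forward_ball T x n"
    using open_Uk U(3) by blast
qed

lemma forward_ball_one:
  assumes fin: "finite (topspace T)" and x: "x \<in> topspace T"
  shows "forward_ball T x 1 = minimal_open T x"
proof
  show "forward_ball T x 1 \<subseteq> minimal_open T x"
  proof
    fix y assume "y \<in> forward_ball T x 1"
    then have y: "y \<in> topspace T" and "furtherness T x y = 0"
      by (auto simp: forward_ball_def)
    moreover obtain U m where "nested_seq T x U m" "y \<in> U (furtherness T x y)"
      using furtherness_attained[OF fin x y] by blast
    ultimately show "y \<in> minimal_open T x"
      by (simp add: nested_seq_def)
  qed
next
  obtain U m where U: "nested_seq T x U m"
    using nested_seq_exists[OF fin x] .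
  have "minimal_open T x \<subseteq> topspace T"
    using openin_subset[OF openin_minimal_open[OF fin x]] .
  then show "minimal_open T x \<subseteq> forward_ball T x 1"
    using furtherness_le[OF U, of 0] U by (auto simp: forward_ball_def nested_seq_def)
qed

lemma basis_from_topology_base:
  assumes open_basis: "\<And>B. B \<in> \<B> \<Longrightarrow> openin T B"
    and base: "\<And>U x. openin T U \<Longrightarrow> x \<in> U \<Longrightarrow> \<exists>B\<in>\<B>. x \<in> B \<and> B \<subseteq> U"
  shows "is_basis_on (topspace T) \<B> \<and> (\<forall>U. openin T U \<longleftrightarrow> open_from_basis (topspace T) \<B> U)"
proof (intro conjI allI iffI)
  show "is_basis_on (topspace T) \<B>"
    unfolding is_basis_on_def
  proof (intro conjI ballI)
    fix B assume "B \<in> \<B>"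
    then show "B \<subseteq> topspace T"
      using open_basis openin_subset by blast
  next
    fix x assume "x \<in> topspace T"
    then show "\<exists>B\<in>\<B>. x \<in> B"
      using base[OF openin_topspace] by blast
  next
    fix B1 B2 x assume "B1 \<in> \<B>" "B2 \<in> \<B>" "x \<in> B1 \<inter> B2"
    then show "\<exists>B3\<in>\<B>. x \<in> B3 \<and> B3 \<subseteq> B1 \<inter> B2"
      using base[of "B1 \<inter> B2" x] open_basis by blast
  qed
next
  fix U assume "openin T U"
  then show "open_from_basis (topspace T) \<B> U"
    unfolding open_from_basis_def using base openin_subset by blast
next
  fix U assume "open_from_basis (topspace T) \<B> U"
  then show "openin T U"
    unfolding open_from_basis_def by (subst openin_subopen) (use open_basis in blast)
qed

theorem mainTheorem11:
  fixes T :: "'a topology"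
  assumes "finite (topspace T)"
  shows "is_basis_on (topspace T) (forward_balls T) \<and>
         (\<forall>U. openin T U \<longleftrightarrow> open_from_basis (topspace T) (forward_balls T) U)"
proof (rule basis_from_topology_base)
  show "openin T B" if "B \<in> forward_balls T" for B
    using that openin_forward_ball[OF assms] by (auto simp: forward_balls_def)
next
  fix U x assume U: "openin T U" "x \<in> U"
  then have x: "x \<in> topspace T"
    using openin_subset by blast
  have "minimal_open T x \<in> forward_balls T"
    using x forward_ball_one[OF assms x] unfolding forward_balls_def by force
  then show "\<exists>B\<in>forward_balls T. x \<in> B \<and> B \<subseteq> U"
    using in_minimal_open[OF assms x] minimal_open_subset[OF U] by blast
qed

end
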